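(* Let $n,k$ be positive integers (with $k$ allowed to depend on $n$) and let $p\in[0,1]$. If $\mathbf{G}\sim\mathcal{G}(n,p,k)$, then asymptotically almost surely $\mathbf{G}$ is $s$-almost-complete for $$s=\max\bigl(2\sqrt{n}(1-p),\;9e^2\log(kn)\bigr).$$
   Context: A graph $G$ "over $k$ blocks of size $n$" has vertex set $V_1\sqcup\dots\sqcup V_k$ with $|V_i|=n$ for every $i$, where $n$ is a power of $2$ with $\log n$ even. Every vertex of a block $V_i$ is identified with a string in $\{0,1\}^{\log n}$, which is written as a pair $(x,y)\in\Sigma\times\Sigma$ with $\Sigma=\{0,1\}^{(\log n)/2}$ ($x$ the first half of the bits, $y$ the second half). $\mathcal{G}(n,p,k)$ is the distribution obtained by sampling a graph on the $kn$ vertices $V_1\sqcup\dots\sqcup V_k$ in which each pair of vertices lying in different blocks is an edge independently with probability $p$, and pairs inside a block are never edges (equivalently, an Erdős–Rényi graph $\mathcal{G}(nk,p)$ intersected with the complete $k$-partite graph with parts $V_1,\dots,V_k$). Given $s>0$, $G$ is $s$-almost-complete if for every $i\neq j\in[k]$ and every $x_i,y_i,x_j\in\Sigma$ there are at most $s$ values $y_j\in\Sigma$ such that the vertex $(x_i,y_i)$ of $V_i$ and the vertex $(x_j,y_j)$ of $V_j$ are not adjacent. "Asymptotically almost surely" means with probability $1-o(1)$ as $n\to\infty$. *)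

theory Defs
  imports "HOL-Probability.Probability"
begin

text \<open>A vertex is a triple (i, x, y): block index i < k and the two halves x, y < r of
  its label, where r = sqrt n = 2^((log n)/2) and the strings in Sigma are identified
  with the numbers 0..r-1.\<close>

type_synonym vertex = "nat \<times> nat \<times> nat"

definition block_vertices :: "nat \<Rightarrow> nat \<Rightarrow> vertex set" where
  "block_vertices r k = {(i, x, y). i < k \<and> x < r \<and> y < r}"

text \<open>Each unordered cross-block pair {u,v} is represented once, as the ordered pair (u,v)
  with the block of u smaller than the block of v.\<close>

definition cross_pairs :: "nat \<Rightarrow> nat \<Rightarrow> (vertex \<times> vertex) set" where
  "cross_pairs r k = {(u, v). u \<in> block_vertices r k \<and> v \<in> block_vertices r k \<and> fst u < fst v}"

definition gnpk :: "nat \<Rightarrow> nat \<Rightarrow> real \<Rightarrow> (vertex \<times> vertex \<Rightarrow> bool) pmf" where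
  "gnpk r k p = Pi_pmf (cross_pairs r k) False (\<lambda>_. bernoulli_pmf p)"

definition adj :: "(vertex \<times> vertex \<Rightarrow> bool) \<Rightarrow> vertex \<Rightarrow> vertex \<Rightarrow> bool" where
  "adj E u v = (if fst u < fst v then E (u, v) else if fst v < fst u then E (v, u) else False)"

definition almost_complete :: "nat \<Rightarrow> nat \<Rightarrow> real \<Rightarrow> (vertex \<times> vertex \<Rightarrow> bool) \<Rightarrow> bool" where
  "almost_complete r k s E =
     (\<forall>i<k. \<forall>j<k. i \<noteq> j \<longrightarrow> (\<forall>xi<r. \<forall>yi<r. \<forall>xj<r.
        real (card {yj. yj < r \<and> \<not> adj E (i, xi, yi) (j, xj, yj)}) \<le> s))"

end

(* Fix a vertex (x_i, y_i) of V_i and a first half x_j of V_j.  The number X of its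
   non-neighbours among the r = sqrt n vertices (x_j, y_j) is a sum of r independent
   Bernoulli(1 - p) variables, so Markov's inequality for 2^X gives
   P(X > s) <= E 2^X / 2^s = (2 - p)^r / 2^s <= exp (r (1 - p) - s ln 2).
   Since r (1 - p) <= s / 2 and ln 2 >= 2/3, this is at most exp (-s/6) <= (k n)^-4,
   because s >= 9 e^2 ln (k n) >= 24 ln (k n).  A union bound over the k^2 r^3 choices
   of (i, j, x_i, y_i, x_j) leaves a failure probability of at most 1/n. *)

theory Submission
  imports Defs "HOL-Analysis.Harmonic_Numbers"
begin

lemma prob_Pi_bernoulli_card_failures_gt:
  fixes c s :: real
  assumes I: "finite I" and P: "P \<subseteq> I" and p: "0 \<le> p" "p \<le> 1" and c: "1 \<le> c"
  shows "measure_pmf.prob (Pi_pmf I False (\<lambda>_. bernoulli_pmf p)) {E. real (card {e\<in>P. \<not> E e}) > s}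
         \<le> (p + (1 - p) * c) ^ card P / c powr s"
proof -
  let ?G = "Pi_pmf I False (\<lambda>_. bernoulli_pmf p)"
  define f where "f e b = (if e \<in> P \<and> \<not> b then c else 1)" for e b
  define u where "u E = (\<Prod>e\<in>I. f e (E e))" for E
  have u_eq: "u E = c ^ card {e\<in>P. \<not> E e}" for E
  proof -
    have "{e\<in>I. e \<in> P \<and> \<not> E e} = {e\<in>P. \<not> E e}"
      using P by auto
    then show ?thesis
      using prod.inter_filter[OF I, of "\<lambda>_. c" "\<lambda>e. e \<in> P \<and> \<not> E e"] by (simp add: u_def f_def)
  qed
  have integrable_bernoulli: "integrable (measure_pmf (bernoulli_pmf p)) g" for g :: "bool \<Rightarrow> real"
    by (rule integrable_measure_pmf_finite) simp
  have integrable_u: "integrable (measure_pmf ?G) u"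
    unfolding u_def by (rule integrable_prod_Pi_pmf) (use I integrable_bernoulli in auto)
  have expectation_u: "measure_pmf.expectation ?G u = (p + (1 - p) * c) ^ card P"
  proof -
    have "measure_pmf.expectation ?G u = (\<Prod>e\<in>I. measure_pmf.expectation (bernoulli_pmf p) (f e))"
      unfolding u_def
      by (rule expectation_prod_Pi_pmf) (use I c integrable_bernoulli in \<open>auto simp: f_def\<close>)
    also have "\<dots> = (\<Prod>e\<in>I. if e \<in> P then p + (1 - p) * c else 1)"
      by (rule prod.cong) (use p in \<open>auto simp: f_def\<close>)
    also have "\<dots> = (p + (1 - p) * c) ^ card P"
    proof -
      have "{e\<in>I. e \<in> P} = P"
        using P by auto
      then show ?thesis
        using prod.inter_filter[OF I, of "\<lambda>_. p + (1 - p) * c" "\<lambda>e. e \<in> P"] by simp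
    qed
    finally show ?thesis .
  qed
  have "c powr s \<le> u E" if "real (card {e\<in>P. \<not> E e}) > s" for E
  proof -
    have "c powr s \<le> c powr real (card {e\<in>P. \<not> E e})"
      using that c by (intro powr_mono) auto
    then show ?thesis
      using c by (simp add: u_eq powr_realpow)
  qed
  then have "{E. real (card {e\<in>P. \<not> E e}) > s} \<subseteq> {E \<in> space (measure_pmf ?G). u E \<ge> c powr s}"
    by auto
  then have "measure_pmf.prob ?G {E. real (card {e\<in>P. \<not> E e}) > s}
      \<le> measure_pmf.prob ?G {E \<in> space (measure_pmf ?G). u E \<ge> c powr s}"
    by (rule measure_pmf.finite_measure_mono) simp
  also have "\<dots> \<le> measure_pmf.expectation ?G u / c powr s"
    by (rule integral_Markov_inequality_measure[OF integrable_u, where A = UNIV])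
       (use c in \<open>auto simp: u_eq\<close>)
  finally show ?thesis
    by (simp add: expectation_u)
qed

lemma finite_block_vertices: "finite (block_vertices r k)"
proof -
  have "block_vertices r k \<subseteq> {..<k} \<times> {..<r} \<times> {..<r}"
    by (auto simp: block_vertices_def)
  then show ?thesis
    by (rule finite_subset) simp
qed

lemma finite_cross_pairs: "finite (cross_pairs r k)"
proof -
  have "cross_pairs r k \<subseteq> block_vertices r k \<times> block_vertices r k"
    by (auto simp: cross_pairs_def)
  then show ?thesis
    by (rule finite_subset) (simp add: finite_block_vertices)
qed

lemma prob_many_non_neighbours:
  assumes p: "0 \<le> p" "p \<le> 1" and ij: "i < k" "j < k" "i \<noteq> j" and xy: "xi < r" "yi < r" "xj < r"
  shows "measure_pmf.prob (gnpk r k p)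
           {E. real (card {yj. yj < r \<and> \<not> adj E (i, xi, yi) (j, xj, yj)}) > s}
         \<le> (2 - p) ^ r / 2 powr s"
proof -
  define link where
    "link y = (if i < j then ((i, xi, yi), (j, xj, y)) else ((j, xj, y), (i, xi, yi)))" for y
  have adj_link: "adj E (i, xi, yi) (j, xj, y) = E (link y)" for E y
    using ij by (auto simp: adj_def link_def)
  have inj: "inj_on link {..<r}"
    by (auto simp: inj_on_def link_def split: if_splits)
  have links: "link ` {..<r} \<subseteq> cross_pairs r k"
    using ij xy by (auto simp: link_def cross_pairs_def block_vertices_def)
  have "card {yj. yj < r \<and> \<not> adj E (i, xi, yi) (j, xj, yj)} = card {e \<in> link ` {..<r}. \<not> E e}" for E
  proof -
    have "{e \<in> link ` {..<r}. \<not> E e} = link ` {yj. yj < r \<and> \<not> E (link yj)}"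
      by auto
    moreover have "inj_on link {yj. yj < r \<and> \<not> E (link yj)}"
      by (rule inj_on_subset[OF inj]) auto
    ultimately show ?thesis
      by (simp add: adj_link card_image)
  qed
  moreover have "(p + (1 - p) * 2) ^ card (link ` {..<r}) = (2 - p) ^ r"
    by (simp add: card_image[OF inj])
  ultimately show ?thesis
    using prob_Pi_bernoulli_card_failures_gt[OF finite_cross_pairs links p, of 2 s]
    by (simp add: gnpk_def)
qed

lemma prob_not_almost_complete_union_bound:
  assumes p: "0 \<le> p" "p \<le> 1"
  shows "measure_pmf.prob (gnpk r k p) {E. \<not> almost_complete r k s E}
         \<le> real (k ^ 2 * r ^ 3) * ((2 - p) ^ r / 2 powr s)"
proof -
  define T where "T = {..<k} \<times> {..<k} \<times> {..<r} \<times> {..<r} \<times> {..<r}"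
  define bad where "bad t = (case t of (i, j, xi, yi, xj) \<Rightarrow>
     if i = j then {} else {E. real (card {yj. yj < r \<and> \<not> adj E (i, xi, yi) (j, xj, yj)}) > s})"
    for t
  have card_T: "card T = k ^ 2 * r ^ 3"
    by (simp add: T_def card_cartesian_product power2_eq_square power3_eq_cube)
  have prob_bad: "measure_pmf.prob (gnpk r k p) (bad t) \<le> (2 - p) ^ r / 2 powr s" if "t \<in> T" for t
    using that p prob_many_non_neighbours[OF p]
    by (auto simp: T_def bad_def split: prod.splits)
  have "{E. \<not> almost_complete r k s E} \<subseteq> (\<Union>t\<in>T. bad t)"
    by (force simp: almost_complete_def T_def bad_def not_le)
  then have "measure_pmf.prob (gnpk r k p) {E. \<not> almost_complete r k s E}
        \<le> measure_pmf.prob (gnpk r k p) (\<Union>t\<in>T. bad t)"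
    by (rule measure_pmf.finite_measure_mono) simp
  also have "\<dots> \<le> (\<Sum>t\<in>T. measure_pmf.prob (gnpk r k p) (bad t))"
    by (rule measure_pmf.finite_measure_subadditive_finite) (simp_all add: T_def)
  also have "\<dots> \<le> real (card T) * ((2 - p) ^ r / 2 powr s)"
    by (rule sum_bounded_above) (rule prob_bad)
  finally show ?thesis
    by (simp add: card_T)
qed

lemma one_plus_power_div_two_powr_le:
  fixes q s :: real
  assumes q: "0 \<le> q" and s: "2 * real r * q \<le> s"
  shows "(1 + q) ^ r / 2 powr s \<le> exp (- s / 6)"
proof -
  have "(1 + q) ^ r \<le> exp q ^ r"
    using q exp_ge_add_one_self[of q] by (intro power_mono) (auto simp: add.commute)
  also have "\<dots> = exp (q * r)"
    by (simp add: exp_of_nat_mult[symmetric] mult.commute)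
  finally have numerator: "(1 + q) ^ r \<le> exp (q * r)" .
  have "0 \<le> s"
    using q s by (smt (verit) mult_nonneg_nonneg of_nat_0_le_iff)
  then have "2 / 3 * s \<le> s * ln 2"
    using ln2_ge_two_thirds by (metis mult.commute mult_left_mono)
  then have denominator: "exp (2 / 3 * s) \<le> 2 powr s"
    by (simp add: powr_def)
  have "(1 + q) ^ r / 2 powr s \<le> exp (q * r) / exp (2 / 3 * s)"
    using numerator denominator by (intro frac_le) auto
  also have "\<dots> = exp (q * r - 2 / 3 * s)"
    by (simp add: exp_diff)
  also have "\<dots> \<le> exp (- s / 6)"
    using s by (simp add: algebra_simps)
  finally show ?thesis .
qed

lemma exp_neg_sixth_le_inverse_power4:
  fixes K s :: real
  assumes K: "1 \<le> K" and s: "9 * exp 2 * ln K \<le> s"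
  shows "exp (- s / 6) \<le> 1 / K ^ 4"
proof -
  have "3 \<le> exp (2::real)"
    using exp_ge_add_one_self[of 2] by simp
  then have "4 * ln K \<le> (9 * exp 2 / 6) * ln K"
    using K by (intro mult_right_mono) auto
  then have "exp (- s / 6) \<le> exp (- (4 * ln K))"
    using s by simp
  also have "\<dots> = 1 / K ^ 4"
    using K exp_of_nat_mult[of 4 "ln K"] by (simp add: exp_minus field_simps)
  finally show ?thesis .
qed

lemma prob_not_almost_complete_le:
  assumes r: "1 \<le> r" and k: "1 \<le> k" and p: "0 \<le> p" "p \<le> 1"
    and s_linear: "2 * real r * (1 - p) \<le> s" and s_log: "9 * exp 2 * ln (real (k * r ^ 2)) \<le> s"
  shows "measure_pmf.prob (gnpk r k p) {E. \<not> almost_complete r k s E} \<le> 1 / real r ^ 2"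
proof -
  define K where "K = real (k * r ^ 2)"
  have K: "1 \<le> K"
  proof -
    have "1 \<le> k * r ^ 2"
      using r k by (simp add: one_le_power)
    then show ?thesis
      unfolding K_def by (metis of_nat_1 of_nat_mono)
  qed
  have "measure_pmf.prob (gnpk r k p) {E. \<not> almost_complete r k s E}
        \<le> real (k ^ 2 * r ^ 3) * ((1 + (1 - p)) ^ r / 2 powr s)"
    using prob_not_almost_complete_union_bound[OF p] by simp
  also have "\<dots> \<le> real (k ^ 2 * r ^ 3) * (1 / K ^ 4)"
  proof -
    have "(1 + (1 - p)) ^ r / 2 powr s \<le> exp (- s / 6)"
      by (rule one_plus_power_div_two_powr_le) (use p s_linear in auto)
    also have "\<dots> \<le> 1 / K ^ 4"
      by (rule exp_neg_sixth_le_inverse_power4[OF K]) (use s_log in \<open>simp add: K_def\<close>)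
    finally show ?thesis
      by (intro mult_left_mono) auto
  qed
  also have "\<dots> \<le> 1 / real r ^ 2"
  proof -
    have "k ^ 2 * r ^ 3 * r ^ 2 \<le> (k * r ^ 2) ^ 4"
    proof -
      have "k ^ 2 * r ^ 3 * r ^ 2 = k ^ 2 * r ^ 5"
        by (simp add: power_add[symmetric])
      also have "\<dots> \<le> k ^ 4 * r ^ 8"
        using r k by (intro mult_mono power_increasing) auto
      also have "\<dots> = (k * r ^ 2) ^ 4"
        by (simp add: power_mult_distrib power_mult[symmetric])
      finally show ?thesis .
    qed
    then have "real (k ^ 2 * r ^ 3) * real r ^ 2 \<le> K ^ 4"
      unfolding K_def by (metis of_nat_le_iff of_nat_mult of_nat_power)
    then show ?thesis
      using K r by (simp add: field_simps)
  qed
  finally show ?thesis .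
qed

lemma prob_almost_complete_ge:
  assumes "1 \<le> r" "1 \<le> k" "0 \<le> p" "p \<le> 1"
    and "2 * real r * (1 - p) \<le> s" "9 * exp 2 * ln (real (k * r ^ 2)) \<le> s"
  shows "1 - 1 / real r ^ 2 \<le> measure_pmf.prob (gnpk r k p) {E. almost_complete r k s E}"
  using prob_not_almost_complete_le[OF assms]
    measure_pmf.prob_compl[of "{E. almost_complete r k s E}" "gnpk r k p"]
  by (simp add: Compl_eq_Diff_UNIV[symmetric] Collect_neg_eq[symmetric])

theorem lemma3p2:
  fixes k :: "nat \<Rightarrow> nat" and p :: "nat \<Rightarrow> real"
  assumes "\<forall>n. 1 \<le> k n"
    and "\<forall>n. 0 \<le> p n \<and> p n \<le> 1"
  shows "(\<lambda>m. let n = (4::nat) ^ m;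
                 s = max (2 * sqrt (real n) * (1 - p n)) (9 * exp 2 * ln (real (k n * n)))
             in measure_pmf.prob (gnpk (2 ^ m) (k n) (p n)) {E. almost_complete (2 ^ m) (k n) s E})
         \<longlonglongrightarrow> 1"
proof -
  define s where
    "s m = max (2 * sqrt (real (4 ^ m)) * (1 - p (4 ^ m))) (9 * exp 2 * ln (real (k (4 ^ m) * 4 ^ m)))"
    for m
  define P where
    "P m = measure_pmf.prob (gnpk (2 ^ m) (k (4 ^ m)) (p (4 ^ m)))
             {E. almost_complete (2 ^ m) (k (4 ^ m)) (s m) E}" for m
  have four_power: "(4::nat) ^ m = (2 ^ m) ^ 2" for m
    by (metis mult.commute power_mult numeral_Bit0_eq_double power2_eq_square mult_2)
  have "1 - 1 / real (2 ^ m) ^ 2 \<le> P m" for m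
  proof -
    have "sqrt (real (4 ^ m)) = real (2 ^ m)"
      unfolding four_power by simp
    then have "2 * real (2 ^ m) * (1 - p (4 ^ m)) \<le> s m"
      by (simp add: s_def)
    moreover have "9 * exp 2 * ln (real (k (4 ^ m) * (2 ^ m) ^ 2)) \<le> s m"
      by (simp add: s_def flip: four_power)
    ultimately show ?thesis
      unfolding P_def by (intro prob_almost_complete_ge) (use assms in auto)
  qed
  then have lower: "1 - (1 / 4) ^ m \<le> P m" for m
    by (metis four_power of_nat_numeral of_nat_power power_one_over)
  have lower_limit: "(\<lambda>m. 1 - (1 / 4 :: real) ^ m) \<longlonglongrightarrow> 1"
    using tendsto_diff[OF tendsto_const LIMSEQ_power_zero[of "1 / 4 :: real"]] by simp
  have "P \<longlonglongrightarrow> 1"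
    by (rule real_tendsto_sandwich[OF _ _ lower_limit tendsto_const])
       (use lower in \<open>auto intro: always_eventually simp: P_def\<close>)
  then show ?thesis
    unfolding P_def s_def Let_def .
qed

end
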